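(* There exists a one-sided non-adaptive tester for $k$-monotonicity of functions $f\colon[n]\to\{0,1\}$ with query complexity $q(n,\varepsilon,k)=O(k/\varepsilon)$.
   Context: $[n]=\{1,\dots,n\}$ with its usual order. A function $f\colon[n]\to\{0,1\}$ is $k$-monotone if there do not exist $x_1\leq\cdots\leq x_{k+1}$ with $f(x_1)=1$ and $f(x_i)\neq f(x_{i+1})$ for all $i\in[k]$. Distance is normalized Hamming distance. A tester, given $\varepsilon$ and query access to $f$, accepts $k$-monotone $f$ with probability at least $2/3$ and rejects $f$ that is $\varepsilon$-far (distance at least $\varepsilon$) from every $k$-monotone function with probability at least $2/3$; one-sided means $k$-monotone functions are accepted with probability $1$; non-adaptive means queries do not depend on previous answers. *)

theory Defs
  imports "HOL-Probability.Probability"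
begin

text \<open>Functions f : [n] -> {0,1} are modelled as f :: nat => bool (True = 1);
  only the values on {1..n} are relevant.\<close>

definition k_monotone :: "nat \<Rightarrow> nat \<Rightarrow> (nat \<Rightarrow> bool) \<Rightarrow> bool" where
  "k_monotone n k f \<longleftrightarrow>
     \<not> (\<exists>x :: nat \<Rightarrow> nat.
          (\<forall>i\<in>{1..k+1}. x i \<in> {1..n}) \<and>
          (\<forall>i\<in>{1..k}. x i \<le> x (Suc i)) \<and>
          f (x 1) \<and>
          (\<forall>i\<in>{1..k}. f (x i) \<noteq> f (x (Suc i))))"

definition ham_dist :: "nat \<Rightarrow> (nat \<Rightarrow> bool) \<Rightarrow> (nat \<Rightarrow> bool) \<Rightarrow> real" where
  "ham_dist n f g = real (card {x\<in>{1..n}. f x \<noteq> g x}) / real n"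

definition far_from_k_monotone :: "nat \<Rightarrow> nat \<Rightarrow> real \<Rightarrow> (nat \<Rightarrow> bool) \<Rightarrow> bool" where
  "far_from_k_monotone n k \<epsilon> f \<longleftrightarrow> (\<forall>g. k_monotone n k g \<longrightarrow> ham_dist n f g \<ge> \<epsilon>)"

text \<open>A non-adaptive randomized tester: a probability distribution over pairs (Q, D),
  where Q is the list of query points (chosen before any answer is seen) and
  D decides accept (True) / reject from the list of answers map f Q.\<close>
type_synonym tester = "(nat list \<times> (bool list \<Rightarrow> bool)) pmf"

definition accept_prob :: "tester \<Rightarrow> (nat \<Rightarrow> bool) \<Rightarrow> real" where
  "accept_prob T f = measure_pmf.prob T {(Q, D). D (map f Q)}"

definition one_sided_nonadaptive_tester ::
  "nat \<Rightarrow> nat \<Rightarrow> real \<Rightarrow> real \<Rightarrow> tester \<Rightarrow> bool" where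
  "one_sided_nonadaptive_tester n k \<epsilon> q T \<longleftrightarrow>
     (\<forall>(Q, D)\<in>set_pmf T. set Q \<subseteq> {1..n} \<and> real (length Q) \<le> q) \<and>
     (\<forall>f. k_monotone n k f \<longrightarrow> accept_prob T f = 1) \<and>
     (\<forall>f. far_from_k_monotone n k \<epsilon> f \<longrightarrow> 1 - accept_prob T f \<ge> 2/3)"

end

theory Submission
  imports Defs
begin

text \<open>Cut [n] into consecutive blocks of length L, about \<open>\<epsilon>n/(9k)\<close>, pick two uniform points
  \<open>x\<^sub>i, y\<^sub>i\<close> in every block and accept iff some k-monotone function agrees with f on them;
  this uses \<open>O(k/\<epsilon>)\<close> queries and never rejects a k-monotone f.
  If a sample is accepted, f is non-constant on at most k of the pairs, and since rounding every
  point to the \<open>x\<^sub>i\<close> of its block is monotone, f differs from its rounding in at least \<open>\<epsilon>n\<close>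
  points when f is \<open>\<epsilon>\<close>-far. The potential \<open>q^(#disagreements) \<cdot> 2^-(#non-constant pairs)\<close> with
  \<open>q = 1 + 1/(4L)\<close> has expectation at most 1 on every block, hence on the whole sample, but is
  at least 3 on every accepted sample; so a far f is accepted with probability at most 1/3.\<close>

subsection \<open>Blocks\<close>

definition block :: "nat \<Rightarrow> nat \<Rightarrow> nat \<Rightarrow> nat set" where
  "block n L i = {x\<in>{1..n}. (x - 1) div L = i}"

definition num_blocks :: "nat \<Rightarrow> nat \<Rightarrow> nat" where
  "num_blocks n L = (n - 1) div L + 1"

lemma block_subset: "block n L i \<subseteq> {1..n}"
  by (auto simp: block_def)

lemma finite_block [simp]: "finite (block n L i)"
  by (rule finite_subset[OF block_subset]) auto

lemma block_start_mem:
  assumes "L \<ge> 1" "n \<ge> 1" "i < num_blocks n L"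
  shows "i * L + 1 \<in> block n L i"
proof -
  have "i \<le> (n - 1) div L" using assms(3) by (simp add: num_blocks_def)
  hence "i * L \<le> ((n - 1) div L) * L" by simp
  also have "\<dots> \<le> n - 1" by simp
  finally have "i * L + 1 \<le> n" using assms by linarith
  thus ?thesis using assms(1) by (simp add: block_def)
qed

lemma card_block_le:
  assumes "L \<ge> 1"
  shows "card (block n L i) \<le> L"
proof -
  have "block n L i \<subseteq> {i * L + 1..i * L + L}"
  proof
    fix x assume "x \<in> block n L i"
    hence x: "x \<ge> 1" "(x - 1) div L = i" by (auto simp: block_def)
    have "(x - 1) div L * L + (x - 1) mod L = x - 1" by (rule div_mult_mod_eq)
    moreover have "(x - 1) mod L < L" using assms by simp
    ultimately show "x \<in> {i * L + 1..i * L + L}" using x by (simp only: atLeastAtMost_iff) linarith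
  qed
  from card_mono[OF _ this] show ?thesis by simp
qed

lemma block_less: "x \<in> block n L i \<Longrightarrow> y \<in> block n L j \<Longrightarrow> i < j \<Longrightarrow> x < y"
  unfolding block_def
  by (metis (mono_tags, lifting) div_le_mono leD le_diff_iff mem_Collect_eq atLeastAtMost_iff
      not_le_imp_less)

lemma mem_block_index:
  "x \<in> {1..n} \<Longrightarrow> x \<in> block n L ((x - 1) div L) \<and> (x - 1) div L < num_blocks n L"
  unfolding block_def num_blocks_def by (auto simp: div_le_mono less_Suc_eq_le)

lemma block_unit_subset: "block n 1 i \<subseteq> {Suc i}"
  by (auto simp: block_def)

lemma k_monotone_comp:
  assumes g: "k_monotone n k g"
    and maps: "\<And>x. x \<in> {1..n} \<Longrightarrow> \<phi> x \<in> {1..n}"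
    and mono: "\<And>x y. x \<in> {1..n} \<Longrightarrow> y \<in> {1..n} \<Longrightarrow> x \<le> y \<Longrightarrow> \<phi> x \<le> \<phi> y"
  shows "k_monotone n k (g \<circ> \<phi>)"
  unfolding k_monotone_def
proof
  assume "\<exists>x. (\<forall>i\<in>{1..k+1}. x i \<in> {1..n}) \<and> (\<forall>i\<in>{1..k}. x i \<le> x (Suc i)) \<and> (g \<circ> \<phi>) (x 1) \<and>
          (\<forall>i\<in>{1..k}. (g \<circ> \<phi>) (x i) \<noteq> (g \<circ> \<phi>) (x (Suc i)))"
  then obtain x where x: "\<forall>i\<in>{1..k+1}. x i \<in> {1..n}" "\<forall>i\<in>{1..k}. x i \<le> x (Suc i)"
    "(g \<circ> \<phi>) (x 1)" "\<forall>i\<in>{1..k}. (g \<circ> \<phi>) (x i) \<noteq> (g \<circ> \<phi>) (x (Suc i))" by blast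
  have "(\<forall>i\<in>{1..k+1}. (\<phi> \<circ> x) i \<in> {1..n}) \<and> (\<forall>i\<in>{1..k}. (\<phi> \<circ> x) i \<le> (\<phi> \<circ> x) (Suc i)) \<and>
     g ((\<phi> \<circ> x) 1) \<and> (\<forall>i\<in>{1..k}. g ((\<phi> \<circ> x) i) \<noteq> g ((\<phi> \<circ> x) (Suc i)))"
    using x maps mono by (auto simp del: atLeastAtMost_iff) (auto simp: Ball_def)
  thus False using g unfolding k_monotone_def by blast
qed

subsection \<open>The potential on a single block\<close>

lemma one_plus_quarter_inverse_power_le:
  assumes "L \<ge> (1::nat)" and "m \<le> L"
  shows "(1 + 1 / (4 * real L)) ^ m \<le> 1 + real m / (2 * real L)"
proof -
  define u where "u = real m / (4 * real L)"
  have u0: "0 \<le> u" and u1: "u \<le> 1/4" using assms by (auto simp: u_def field_simps)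
  have "(1 + 1 / (4 * real L)) ^ m \<le> exp (1 / (4 * real L)) ^ m"
    using exp_ge_add_one_self[of "1 / (4 * real L)"] by (intro power_mono) (auto simp: add.commute)
  also have "\<dots> = exp u" by (simp add: u_def exp_of_nat_mult[symmetric])
  also have "\<dots> \<le> 1 + u + u\<^sup>2" using exp_bound[OF u0] u1 by simp
  also have "\<dots> \<le> 1 + 2 * u" using u0 u1 mult_right_mono[of u 1 u] by (simp add: power2_eq_square)
  also have "\<dots> = 1 + real m / (2 * real L)" by (simp add: u_def)
  finally show ?thesis .
qed

lemma sum_bool_valued:
  fixes f :: "'a \<Rightarrow> bool"
  assumes "finite B"
  shows "(\<Sum>y\<in>B. G (f y)) =
    real (card {x\<in>B. f x}) * G True + real (card {x\<in>B. \<not> f x}) * (G False :: real)"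
proof -
  have "(\<Sum>y\<in>B. G (f y)) = (\<Sum>y\<in>B. if f y then G True else G False)"
    by (intro sum.cong) auto
  also have "\<dots> = (\<Sum>y\<in>{x\<in>B. f x}. G True) + (\<Sum>y\<in>{x\<in>B. \<not> f x}. G False)"
    using assms by (subst sum.If_cases) (simp_all add: Int_def)
  finally show ?thesis by simp
qed

text \<open>With c points where f is true and d where it is false, the sum equals
  \<open>c q\<^sup>d (c + d/2) + d q\<^sup>c (d + c/2)\<close>, and \<open>q\<^sup>m \<le> 1 + m/(2L)\<close> leaves
  \<open>c\<^sup>2 + cd + d\<^sup>2 + (3/4) cd (c + d)/L \<le> (c + d)\<^sup>2\<close>.\<close>

lemma sum_block_potential_le:
  fixes f :: "'a \<Rightarrow> bool"
  assumes fin: "finite B" and cB: "card B \<le> L" and L: "L \<ge> 1"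
  shows "(\<Sum>p\<in>B\<times>B. (1 + 1 / (4 * real L)) ^ card {x\<in>B. f x \<noteq> f (fst p)} *
            (if f (fst p) \<noteq> f (snd p) then 1/2 else 1)) \<le> real (card B) ^ 2"
proof -
  define c where "c = card {x\<in>B. f x}"
  define d where "d = card {x\<in>B. \<not> f x}"
  define q where "q = 1 + 1 / (4 * real L)"
  have cd: "card B = c + d" unfolding c_def d_def
    using fin by (subst card_Un_disjoint[symmetric]) (auto intro: arg_cong[where f=card])
  have disagree: "card {x\<in>B. f x \<noteq> f y} = (if f y then d else c)" for y
    unfolding c_def d_def by (cases "f y") (auto intro: arg_cong[where f=card])
  have inner: "(\<Sum>y'\<in>B. q ^ card {x\<in>B. f x \<noteq> f y} * (if f y \<noteq> f y' then 1/2 else 1))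
      = q ^ (if f y then d else c) * (if f y then c + d/2 else d + c/2)" for y
  proof -
    have "(\<Sum>y'\<in>B. q ^ card {x\<in>B. f x \<noteq> f y} * (if f y \<noteq> f y' then 1/2 else 1))
        = q ^ (if f y then d else c) * (\<Sum>y'\<in>B. (\<lambda>b. if f y \<noteq> b then 1/2 else 1) (f y'))"
      unfolding disagree by (simp add: sum_distrib_left)
    also have "\<dots> = q ^ (if f y then d else c) * (if f y then c + d/2 else d + c/2)"
      by (subst sum_bool_valued[OF fin]) (auto simp: c_def d_def)
    finally show ?thesis .
  qed
  have "(\<Sum>p\<in>B\<times>B. q ^ card {x\<in>B. f x \<noteq> f (fst p)} * (if f (fst p) \<noteq> f (snd p) then 1/2 else 1))
     = (\<Sum>y\<in>B. \<Sum>y'\<in>B. q ^ card {x\<in>B. f x \<noteq> f y} * (if f y \<noteq> f y' then 1/2 else 1))"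
    by (simp add: sum.cartesian_product case_prod_beta)
  also have "\<dots> = (\<Sum>y\<in>B. (\<lambda>b. q ^ (if b then d else c) * (if b then c + d/2 else d + c/2)) (f y))"
    by (simp only: inner)
  also have "\<dots> = c * (q ^ d * (c + d/2)) + d * (q ^ c * (d + c/2))"
    by (subst sum_bool_valued[OF fin]) (simp add: c_def d_def)
  also have "\<dots> \<le> c * ((1 + d / (2 * L)) * (c + d/2)) + d * ((1 + c / (2 * L)) * (d + c/2))"
  proof -
    have "q ^ d \<le> 1 + d / (2 * L)" "q ^ c \<le> 1 + c / (2 * L)"
      unfolding q_def using one_plus_quarter_inverse_power_le[OF L] cd cB by simp_all
    thus ?thesis by (intro add_mono mult_left_mono mult_right_mono) auto
  qed
  also have "\<dots> = c\<^sup>2 + c * d + d\<^sup>2 + (3/4) * (c * d) * ((c + d) / L)"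
    using L by (simp add: field_simps power2_eq_square)
  also have "\<dots> \<le> c\<^sup>2 + c * d + d\<^sup>2 + (3/4) * (c * d) * 1"
  proof -
    have "(c + d) / L \<le> 1" using cd cB L by (simp add: field_simps)
    thus ?thesis by (intro add_left_mono mult_left_mono) auto
  qed
  also have "\<dots> \<le> real (card B) ^ 2" by (simp add: cd power2_eq_square algebra_simps)
  finally show ?thesis by (simp add: q_def)
qed

subsection \<open>The block tester\<close>

definition block_samples :: "nat \<Rightarrow> nat \<Rightarrow> (nat \<Rightarrow> nat \<times> nat) set" where
  "block_samples n L = PiE {..<num_blocks n L} (\<lambda>i. block n L i \<times> block n L i)"

definition block_queries :: "nat \<Rightarrow> nat \<Rightarrow> (nat \<Rightarrow> nat \<times> nat) \<Rightarrow> nat list" where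
  "block_queries n L S = concat (map (\<lambda>i. [fst (S i), snd (S i)]) [0..<num_blocks n L])"

definition k_monotone_consistent :: "nat \<Rightarrow> nat \<Rightarrow> nat list \<Rightarrow> bool list \<Rightarrow> bool" where
  "k_monotone_consistent n k Q ans \<longleftrightarrow> (\<exists>g. k_monotone n k g \<and> map g Q = ans)"

definition block_tester :: "nat \<Rightarrow> nat \<Rightarrow> nat \<Rightarrow> tester" where
  "block_tester n k L =
     map_pmf (\<lambda>S. (block_queries n L S, k_monotone_consistent n k (block_queries n L S)))
       (pmf_of_set (block_samples n L))"

definition mixed_blocks :: "nat \<Rightarrow> nat \<Rightarrow> (nat \<Rightarrow> bool) \<Rightarrow> (nat \<Rightarrow> nat \<times> nat) \<Rightarrow> nat set" where
  "mixed_blocks n L f S = {i\<in>{..<num_blocks n L}. f (fst (S i)) \<noteq> f (snd (S i))}"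

definition disagreements :: "nat \<Rightarrow> nat \<Rightarrow> (nat \<Rightarrow> bool) \<Rightarrow> (nat \<Rightarrow> nat \<times> nat) \<Rightarrow> nat" where
  "disagreements n L f S = (\<Sum>i<num_blocks n L. card {x\<in>block n L i. f x \<noteq> f (fst (S i))})"

lemma set_block_queries: "set (block_queries n L S) = (\<Union>i<num_blocks n L. {fst (S i), snd (S i)})"
  by (auto simp: block_queries_def)

lemma length_block_queries: "length (block_queries n L S) = 2 * num_blocks n L"
  by (simp add: block_queries_def length_concat o_def sum_list_triv)

lemma finite_block_samples: "finite (block_samples n L)"
  by (auto simp: block_samples_def intro!: finite_PiE)

lemma block_samples_nonempty: "L \<ge> 1 \<Longrightarrow> n \<ge> 1 \<Longrightarrow> block_samples n L \<noteq> {}"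
  using block_start_mem by (auto simp: block_samples_def PiE_eq_empty_iff)

lemma block_samples_mem:
  "S \<in> block_samples n L \<Longrightarrow> i < num_blocks n L \<Longrightarrow>
     fst (S i) \<in> block n L i \<and> snd (S i) \<in> block n L i"
  by (auto simp: block_samples_def dest!: PiE_mem)

lemma block_queries_subset: "S \<in> block_samples n L \<Longrightarrow> set (block_queries n L S) \<subseteq> {1..n}"
  using block_samples_mem block_subset unfolding set_block_queries by fastforce

lemma accept_prob_block_tester:
  assumes "L \<ge> 1" "n \<ge> 1"
  shows "accept_prob (block_tester n k L) f =
    card {S\<in>block_samples n L. k_monotone_consistent n k (block_queries n L S)
            (map f (block_queries n L S))} / card (block_samples n L)"
  unfolding accept_prob_def block_tester_def
  by (simp add: measure_pmf_of_set[OF block_samples_nonempty[OF assms] finite_block_samples]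
      vimage_def Int_def)

text \<open>The \<open>k + 1\<close> first mixed blocks yield an alternating chain for any consistent g:
  in the j-th one take the point of the pair where g equals \<open>odd j\<close>.\<close>

lemma card_mixed_blocks_le_if_consistent:
  assumes S: "S \<in> block_samples n L"
    and consistent: "k_monotone_consistent n k (block_queries n L S) (map f (block_queries n L S))"
  shows "card (mixed_blocks n L f S) \<le> k"
proof (rule ccontr)
  define M where "M = mixed_blocks n L f S"
  obtain g where g: "k_monotone n k g" and agree: "\<forall>x\<in>set (block_queries n L S). g x = f x"
    using consistent by (auto simp: k_monotone_consistent_def map_eq_conv)
  assume "\<not> card (mixed_blocks n L f S) \<le> k"
  hence cM: "card M \<ge> k + 1" by (simp add: M_def)
  define xs where "xs = sorted_list_of_set M"
  have finM: "finite M" by (simp add: M_def mixed_blocks_def)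
  have lxs: "length xs = card M" and sxs: "sorted_wrt (<) xs" and setxs: "set xs = M"
    using finM by (simp_all add: xs_def)
  define idx where "idx j = xs ! (j - 1)" for j
  define pt where
    "pt j = (if g (fst (S (idx j))) = odd j then fst (S (idx j)) else snd (S (idx j)))" for j
  have idx_mixed: "idx j \<in> M" if "j \<in> {1..k+1}" for j
    using that lxs cM setxs nth_mem[of "j - 1" xs] unfolding idx_def by auto
  have pt_block: "pt j \<in> block n L (idx j)" if "j \<in> {1..k+1}" for j
    using idx_mixed[OF that] block_samples_mem[OF S]
    unfolding pt_def M_def mixed_blocks_def by auto
  have pt_val: "g (pt j) = odd j" if "j \<in> {1..k+1}" for j
  proof -
    have i: "idx j < num_blocks n L" "f (fst (S (idx j))) \<noteq> f (snd (S (idx j)))"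
      using idx_mixed[OF that] by (auto simp: M_def mixed_blocks_def)
    hence "g (fst (S (idx j))) \<noteq> g (snd (S (idx j)))"
      using agree unfolding set_block_queries by auto
    thus ?thesis unfolding pt_def by auto
  qed
  have pt_mono: "pt j \<le> pt (Suc j)" if j: "j \<in> {1..k}" for j
  proof -
    have "idx j < idx (Suc j)" unfolding idx_def
      using sorted_wrt_nth_less[OF sxs, of "j - 1" "Suc j - 1"] j lxs cM by auto
    thus ?thesis using block_less[OF pt_block pt_block] j by (simp add: less_imp_le)
  qed
  have "(\<forall>i\<in>{1..k+1}. pt i \<in> {1..n}) \<and> (\<forall>i\<in>{1..k}. pt i \<le> pt (Suc i)) \<and> g (pt 1) \<and>
          (\<forall>i\<in>{1..k}. g (pt i) \<noteq> g (pt (Suc i)))"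
    using pt_block block_subset pt_mono pt_val[of 1] pt_val by fastforce
  thus False using g unfolding k_monotone_def by blast
qed

text \<open>Rounding every point to the first sampled point of its block is monotone, so f must
  be \<open>\<epsilon>\<close>-far from its rounding, which agrees with the consistent g on the rounded points.\<close>

lemma disagreements_ge_if_consistent:
  assumes n: "n \<ge> 1" and S: "S \<in> block_samples n L"
    and consistent: "k_monotone_consistent n k (block_queries n L S) (map f (block_queries n L S))"
    and far: "far_from_k_monotone n k \<epsilon> f"
  shows "\<epsilon> * n \<le> real (disagreements n L f S)"
proof -
  obtain g where g: "k_monotone n k g" and agree: "\<forall>x\<in>set (block_queries n L S). g x = f x"
    using consistent by (auto simp: k_monotone_consistent_def map_eq_conv)
  define \<phi> where "\<phi> x = fst (S ((x - 1) div L))" for x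
  have \<phi>_block: "\<phi> x \<in> block n L ((x - 1) div L)" and \<phi>_query: "\<phi> x \<in> set (block_queries n L S)"
    if "x \<in> {1..n}" for x
    using mem_block_index[OF that, of L] block_samples_mem[OF S]
    unfolding \<phi>_def set_block_queries by auto
  have "k_monotone n k (g \<circ> \<phi>)"
  proof (rule k_monotone_comp[OF g])
    fix x assume "x \<in> {1..n}" thus "\<phi> x \<in> {1..n}" using \<phi>_block block_subset by blast
  next
    fix x y assume xy: "x \<in> {1..n}" "y \<in> {1..n}" "x \<le> y"
    hence "(x - 1) div L = (y - 1) div L \<or> (x - 1) div L < (y - 1) div L"
      using div_le_mono[of "x - 1" "y - 1" L] by linarith
    thus "\<phi> x \<le> \<phi> y"
      using block_less[OF \<phi>_block[OF xy(1)] \<phi>_block[OF xy(2)]] by (auto simp: \<phi>_def)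
  qed
  hence "\<epsilon> \<le> ham_dist n f (g \<circ> \<phi>)" using far unfolding far_from_k_monotone_def by blast
  moreover have "{x\<in>{1..n}. f x \<noteq> (g \<circ> \<phi>) x} = {x\<in>{1..n}. f x \<noteq> f (\<phi> x)}"
    using \<phi>_query agree by auto
  ultimately have "\<epsilon> * n \<le> real (card {x\<in>{1..n}. f x \<noteq> f (\<phi> x)})"
    using n by (simp add: ham_dist_def field_simps)
  also have "{x\<in>{1..n}. f x \<noteq> f (\<phi> x)} =
      (\<Union>i<num_blocks n L. {x\<in>block n L i. f x \<noteq> f (fst (S i))})"
    using mem_block_index block_subset by (fastforce simp: \<phi>_def block_def)
  also have "card \<dots> = disagreements n L f S"
    unfolding disagreements_def by (rule card_UN_disjoint) (auto simp: block_def)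
  finally show ?thesis .
qed

lemma disagreements_unit_blocks:
  assumes "S \<in> block_samples n 1"
  shows "disagreements n 1 f S = 0"
proof -
  have "{x\<in>block n 1 i. f x \<noteq> f (fst (S i))} = {}" if "i < num_blocks n 1" for i
    using block_samples_mem[OF assms that] block_unit_subset[of n i]
    by (metis (mono_tags, lifting) empty_Collect_eq singletonD subsetD)
  thus ?thesis unfolding disagreements_def by (intro sum.neutral) simp
qed

subsection \<open>The potential on a whole sample\<close>

definition potential :: "nat \<Rightarrow> nat \<Rightarrow> (nat \<Rightarrow> bool) \<Rightarrow> nat \<Rightarrow> nat \<times> nat \<Rightarrow> real" where
  "potential n L f i p = (1 + 1 / (4 * real L)) ^ card {x\<in>block n L i. f x \<noteq> f (fst p)} *
      (if f (fst p) \<noteq> f (snd p) then 1/2 else 1)"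

lemma potential_nonneg: "potential n L f i p \<ge> 0"
  by (simp add: potential_def)

lemma prod_potential:
  "(\<Prod>i<num_blocks n L. potential n L f i (S i)) =
     (1 + 1 / (4 * real L)) ^ disagreements n L f S * (1/2) ^ card (mixed_blocks n L f S)"
proof -
  have "(\<Prod>i<num_blocks n L. if f (fst (S i)) \<noteq> f (snd (S i)) then 1/2 else 1 :: real) =
      (1/2) ^ card (mixed_blocks n L f S)"
    by (subst prod.If_cases) (simp_all add: Int_def mixed_blocks_def)
  thus ?thesis
    unfolding potential_def prod.distrib disagreements_def by (simp add: power_sum)
qed

lemma sum_prod_potential_le_card:
  assumes L: "L \<ge> 1"
  shows "(\<Sum>S\<in>block_samples n L. \<Prod>i<num_blocks n L. potential n L f i (S i))
           \<le> real (card (block_samples n L))"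
proof -
  have "(\<Sum>S\<in>block_samples n L. \<Prod>i<num_blocks n L. potential n L f i (S i)) =
        (\<Prod>i<num_blocks n L. \<Sum>p\<in>block n L i \<times> block n L i. potential n L f i p)"
    unfolding block_samples_def by (rule prod_sum_PiE[symmetric]) auto
  also have "\<dots> \<le> (\<Prod>i<num_blocks n L. real (card (block n L i)) ^ 2)"
    using sum_block_potential_le[OF finite_block card_block_le[OF L] L]
    by (intro prod_mono conjI sum_nonneg potential_nonneg) (simp_all add: potential_def)
  also have "\<dots> = real (card (block_samples n L))"
    unfolding block_samples_def by (simp add: card_PiE card_cartesian_product power2_eq_square)
  finally show ?thesis .
qed

lemma prod_potential_ge_3:
  assumes L: "L \<ge> 1" and k: "k \<ge> 1" and big: "9 * real k * real L \<le> \<epsilon> * n"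
    and mixed: "card (mixed_blocks n L f S) \<le> k"
    and disagree: "\<epsilon> * n \<le> real (disagreements n L f S)"
  shows "3 \<le> (\<Prod>i<num_blocks n L. potential n L f i (S i))"
proof -
  define q :: real where "q = 1 + 1 / (4 * real L)"
  have q1: "q \<ge> 1" by (simp add: q_def)
  have "(5/4::real) \<le> q ^ L"
    using Bernoulli_inequality[of "1 / (4 * real L)" L] L
    by (simp add: q_def order_trans[OF _ divide_nonneg_nonneg])
  hence "(5/4::real) ^ (9 * k) \<le> q ^ (9 * k * L)"
    using power_mono[of "5/4" "q ^ L" "9 * k"] by (simp add: power_mult[symmetric] mult.commute)
  also have "\<dots> \<le> q ^ disagreements n L f S"
  proof -
    have "real (9 * k * L) \<le> real (disagreements n L f S)" using big disagree by simp
    thus ?thesis using q1 by (intro power_increasing) (simp_all only: of_nat_le_iff)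
  qed
  finally have "(5/4) ^ (9 * k) * (1/2) ^ k \<le> (\<Prod>i<num_blocks n L. potential n L f i (S i))"
    using mixed q1 unfolding prod_potential q_def[symmetric]
    by (intro mult_mono power_decreasing) auto
  moreover have "(5/4::real) ^ (9 * k) * (1/2) ^ k = ((5/4) ^ 9 / 2) ^ k"
    by (simp add: power_mult power_mult_distrib[symmetric] power_divide)
  moreover have "(5/4::real) ^ 9 / 2 \<le> ((5/4) ^ 9 / 2) ^ k"
    using k by (intro self_le_power) (auto simp: power_divide)
  moreover have "3 \<le> (5/4::real) ^ 9 / 2" by (simp add: power_divide)
  ultimately show ?thesis by linarith
qed

lemma block_tester_queries:
  assumes "L \<ge> 1" "n \<ge> 1" and "(Q, D) \<in> set_pmf (block_tester n k L)"
  shows "set Q \<subseteq> {1..n} \<and> length Q = 2 * num_blocks n L"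
proof -
  obtain S where "S \<in> block_samples n L" "Q = block_queries n L S"
    using assms(3) unfolding block_tester_def
    by (auto simp: set_pmf_of_set[OF block_samples_nonempty[OF assms(1,2)] finite_block_samples])
  thus ?thesis using block_queries_subset length_block_queries by simp
qed

lemma block_tester_accepts_k_monotone:
  assumes "L \<ge> 1" "n \<ge> 1" and "k_monotone n k f"
  shows "accept_prob (block_tester n k L) f = 1"
proof -
  have "{S\<in>block_samples n L. k_monotone_consistent n k (block_queries n L S)
          (map f (block_queries n L S))} = block_samples n L"
    using assms(3) by (auto simp: k_monotone_consistent_def)
  thus ?thesis
    using block_samples_nonempty[OF assms(1,2)] finite_block_samples
    by (simp add: accept_prob_block_tester[OF assms(1,2)] card_gt_0_iff)
qed

lemma block_tester_rejects_far:
  assumes L: "L \<ge> 1" and n: "n \<ge> 1" and k: "k \<ge> 1" and \<epsilon>: "0 < \<epsilon>"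
    and block_length: "L = 1 \<or> 9 * real k * real L \<le> \<epsilon> * n"
    and far: "far_from_k_monotone n k \<epsilon> f"
  shows "accept_prob (block_tester n k L) f \<le> 1/3"
proof -
  define A where "A = {S\<in>block_samples n L.
    k_monotone_consistent n k (block_queries n L S) (map f (block_queries n L S))}"
  have mixed: "card (mixed_blocks n L f S) \<le> k"
    and disagree: "\<epsilon> * n \<le> real (disagreements n L f S)" if "S \<in> A" for S
  proof -
    have "S \<in> block_samples n L"
      and "k_monotone_consistent n k (block_queries n L S) (map f (block_queries n L S))"
      using that by (simp_all add: A_def)
    thus "card (mixed_blocks n L f S) \<le> k" "\<epsilon> * n \<le> real (disagreements n L f S)"
      by (blast intro: card_mixed_blocks_le_if_consistent disagreements_ge_if_consistent[OF n _ _ far])+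
  qed
  have "3 * real (card A) \<le> real (card (block_samples n L))"
  proof (cases "L = 1")
    case True
    have "A = {}"
    proof (rule equals0I)
      fix S assume S: "S \<in> A"
      have "\<epsilon> * n \<le> real (disagreements n L f S)" by (rule disagree[OF S])
      also have "\<dots> = 0" using S disagreements_unit_blocks True by (simp add: A_def)
      finally show False using \<epsilon> n by (simp add: mult_le_0_iff)
    qed
    thus ?thesis by simp
  next
    case False
    hence big: "9 * real k * real L \<le> \<epsilon> * n" using block_length by simp
    have "3 * real (card A) = (\<Sum>S\<in>A. 3)" by simp
    also have "\<dots> \<le> (\<Sum>S\<in>A. \<Prod>i<num_blocks n L. potential n L f i (S i))"
      by (intro sum_mono prod_potential_ge_3[OF L k big mixed disagree])
    also have "\<dots> \<le> (\<Sum>S\<in>block_samples n L. \<Prod>i<num_blocks n L. potential n L f i (S i))"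
      using finite_block_samples
      by (intro sum_mono2) (auto simp: A_def potential_nonneg prod_nonneg)
    also have "\<dots> \<le> real (card (block_samples n L))" by (rule sum_prod_potential_le_card[OF L])
    finally show ?thesis .
  qed
  thus ?thesis
    using block_samples_nonempty[OF L n] finite_block_samples
    unfolding accept_prob_block_tester[OF L n] A_def[symmetric]
    by (simp add: field_simps card_gt_0_iff)
qed

lemma block_length_exists:
  fixes \<epsilon> :: real
  assumes n: "n \<ge> 1" and k: "k \<ge> 1" and \<epsilon>: "0 < \<epsilon>" "\<epsilon> \<le> 1"
  obtains L where "L \<ge> 1" "L = 1 \<or> 9 * real k * real L \<le> \<epsilon> * n"
    "real (num_blocks n L) \<le> 19 * real k / \<epsilon>"
proof (cases "9 * real k \<le> \<epsilon> * n")
  case True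
  define y where "y = \<epsilon> * n / (9 * k)"
  have y: "1 \<le> y" using True k by (simp add: y_def field_simps)
  define L where "L = nat \<lfloor>y\<rfloor>"
  have floor_ge_1: "1 \<le> real_of_int \<lfloor>y\<rfloor>" using y by simp
  hence "y \<le> 2 * real_of_int \<lfloor>y\<rfloor>" using real_of_int_floor_gt_diff_one[of y] by linarith
  hence Ly: "real L \<le> y" "y / 2 \<le> real L" "L \<ge> 1"
    using floor_ge_1 of_int_floor_le[of y] by (auto simp: L_def le_nat_iff)
  have "(n - 1) div L * L \<le> n" using div_mult_mod_eq[of "n - 1" L] by linarith
  hence "real ((n - 1) div L) * real L \<le> real n" by (metis of_nat_le_iff of_nat_mult)
  hence "real ((n - 1) div L) \<le> real n / real L" using Ly by (simp add: field_simps)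
  also have "\<dots> \<le> real n / (y / 2)" using Ly y by (intro divide_left_mono) auto
  also have "\<dots> = 18 * real k / \<epsilon>" using n k \<epsilon> by (simp add: y_def field_simps)
  finally have "real (num_blocks n L) \<le> 19 * real k / \<epsilon>"
    using k \<epsilon> by (simp add: num_blocks_def field_simps)
  moreover have "9 * real k * real L \<le> \<epsilon> * n" using Ly k by (simp add: y_def field_simps)
  ultimately show ?thesis using that Ly by blast
next
  case False
  have "real (num_blocks n 1) \<le> 19 * real k / \<epsilon>"
    using False n \<epsilon> by (simp add: num_blocks_def field_simps)
  thus ?thesis using that by blast
qed

theorem theorem1p4:
  shows "\<exists>C>0. \<forall>n k (\<epsilon>::real). n \<ge> 1 \<longrightarrow> k \<ge> 1 \<longrightarrow> 0 < \<epsilon> \<longrightarrow> \<epsilon> \<le> 1 \<longrightarrow>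
           (\<exists>T. one_sided_nonadaptive_tester n k \<epsilon> (C * real k / \<epsilon>) T)"
proof (intro exI[of _ "38::real"] conjI allI impI)
  fix n k :: nat and \<epsilon> :: real
  assume n: "n \<ge> 1" and k: "k \<ge> 1" and \<epsilon>: "0 < \<epsilon>" "\<epsilon> \<le> 1"
  obtain L where L: "L \<ge> 1" and block_length: "L = 1 \<or> 9 * real k * real L \<le> \<epsilon> * n"
    and blocks: "real (num_blocks n L) \<le> 19 * real k / \<epsilon>"
    using block_length_exists[OF n k \<epsilon>] .
  have "one_sided_nonadaptive_tester n k \<epsilon> (38 * real k / \<epsilon>) (block_tester n k L)"
    unfolding one_sided_nonadaptive_tester_def
    using block_tester_queries[OF L n] blocks block_tester_accepts_k_monotone[OF L n]
      block_tester_rejects_far[OF L n k \<epsilon>(1) block_length]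
    by auto
  thus "\<exists>T. one_sided_nonadaptive_tester n k \<epsilon> (38 * real k / \<epsilon>) T" ..
qed simp

end
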